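(* Let $K>0$ and let $f$ be an integer-valued polynomial of degree $n\ge1$. Then the number of integers $m$ with $|f(m)|\le K$ is at most $n+4(K\,n!)^{1/n}$. In particular, for any finite set $S\subset\mathbb{Z}$ whose elements all have absolute value at most $K$, the number $E_S(f)$ of integers $m$ with $f(m)\in S$ satisfies $E_S(f)\le (1+4/e)\,n+O(\log n)$, where the implied constant depends only on $K$.
   Context: A polynomial $f\in\mathbb{Q}[x]$ is integer-valued if $f(m)\in\mathbb{Z}$ for every $m\in\mathbb{Z}$. For a finite set $S$, $E_S(f)=\#\{m\in\mathbb{Z}: f(m)\in S\}$. *)

theory Defs
  imports Complex_Main "HOL-Computational_Algebra.Polynomial"
begin

definition integer_valued :: "rat poly \<Rightarrow> bool" where
  "integer_valued f \<longleftrightarrow> (\<forall>m::int. poly f (of_int m) \<in> \<int>)"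

definition E_S :: "int set \<Rightarrow> rat poly \<Rightarrow> nat" where
  "E_S S f = card {m::int. poly f (of_int m) \<in> of_int ` S}"

end

theory Submission
  imports Defs
begin

(*
  Suppose |f| <= K at N = n + M integers.  Choose n + 1 of them whose mutual distances
  dominate those of the extremal points c_0, ..., c_n of the Chebyshev polynomial T_n,
  rescaled to [0, M].  Writing the leading coefficient as the divided difference
  sum_i f(x_i) / prod_{l ~= i} (x_i - x_l) gives |lead f| <= K sum_i 1 / prod_{l ~= i} |c_i - c_l|,
  and the same formula applied to T_n evaluates this sum as 2^(2n-1) / M^n.  Since f is
  integer valued, n! lead f is a nonzero integer, hence M^n <= 4^n K n!.  Finally the bound
  n! <= e n^(n+1) / e^n turns n + 4 (K n!)^(1/n) into (1 + 4/e) n + O(log n).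
*)

lemma coeff_eq_divided_difference:
  fixes p :: "'a::field poly" and x :: "nat \<Rightarrow> 'a"
  assumes deg: "degree p \<le> n" and inj: "inj_on x {..n}"
  shows "coeff p n = (\<Sum>i\<le>n. poly p (x i) / (\<Prod>l\<in>{..n}-{i}. (x i - x l)))"
proof -
  define Q where "Q i = (\<Prod>l\<in>{..n}-{i}. [:- x l, 1:])" for i
  define d where "d i = (\<Prod>l\<in>{..n}-{i}. (x i - x l))" for i
  define L where "L = (\<Sum>i\<le>n. smult (poly p (x i) / d i) (Q i))"
  have degQ: "degree (Q i) = n" if "i \<le> n" for i
    unfolding Q_def using that by (subst degree_prod_eq_sum_degree) auto
  have lcQ: "coeff (Q i) n = 1" if "i \<le> n" for i
    using lead_coeff_prod[of "\<lambda>l. [:- x l, 1:]" "{..n}-{i}"] degQ[OF that] unfolding Q_def by simp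
  have d_nonzero: "d i \<noteq> 0" if "i \<le> n" for i
    unfolding d_def using inj that by (auto simp: inj_on_def)
  have poly_Q: "poly (Q i) (x k) = (if k = i then d i else 0)" if "i \<le> n" "k \<le> n" for i k
  proof (cases "k = i")
    case False
    then have "(\<Prod>l\<in>{..n}-{i}. poly [:- x l, 1:] (x k)) = 0"
      using that by (intro prod_zero) auto
    then show ?thesis using False by (simp add: Q_def poly_prod)
  qed (simp add: Q_def d_def poly_prod)
  have poly_L: "poly L (x k) = poly p (x k)" if "k \<le> n" for k
  proof -
    have "poly L (x k) = (\<Sum>i\<le>n. poly p (x i) / d i * poly (Q i) (x k))"
      by (simp add: L_def poly_sum)
    also have "\<dots> = (\<Sum>i\<le>n. if i = k then poly p (x k) else 0)"
      by (intro sum.cong refl) (use that d_nonzero in \<open>auto simp: poly_Q\<close>)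
    finally show ?thesis using that by simp
  qed
  have "degree L \<le> n"
    unfolding L_def by (intro degree_sum_le) (auto intro: order.trans[OF degree_smult_le] simp: degQ)
  then have "p = L"
    using deg inj poly_L by (intro poly_eqI_degree[where A = "x ` {..n}"]) (auto simp: card_image)
  then have "coeff p n = coeff L n" by simp
  also have "\<dots> = (\<Sum>i\<le>n. poly p (x i) / d i * coeff (Q i) n)"
    by (simp add: L_def coeff_sum)
  finally show ?thesis by (simp add: lcQ d_def)
qed

lemma prod_of_nat_diff_nodes:
  assumes "i \<le> n"
  shows "(\<Prod>l\<in>{..n}-{i}. (of_nat i - of_nat l :: 'a::field_char_0)) = (-1) ^ (n - i) * fact i * fact (n - i)"
proof -
  have "(\<Prod>l\<in>{..i+k}-{i}. (of_nat i - of_nat l :: 'a)) = (-1) ^ k * fact i * fact k" for k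
  proof (induction k)
    case 0
    have "{..i+0}-{i} = {..<i}" by auto
    moreover have "(\<Prod>l<i. (of_nat i - of_nat l :: 'a)) = of_nat (\<Prod>l=0..<i. i - l)"
      by (simp add: of_nat_prod of_nat_diff lessThan_atLeast0)
    ultimately show ?case by (simp add: fact_prod_rev)
  next
    case (Suc k)
    have "{..i+Suc k}-{i} = insert (i+Suc k) ({..i+k}-{i})" by auto
    then have "(\<Prod>l\<in>{..i+Suc k}-{i}. (of_nat i - of_nat l :: 'a))
        = - of_nat (Suc k) * (\<Prod>l\<in>{..i+k}-{i}. (of_nat i - of_nat l :: 'a))"
      by simp
    then show ?case using Suc by (simp add: algebra_simps)
  qed
  from this[of "n - i"] show ?thesis using assms by simp
qed

lemma integer_valued_fact_mult_coeff_ge_one: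
  fixes f :: "rat poly"
  assumes iv: "integer_valued f" and deg: "degree f = n" and n: "1 \<le> n"
  shows "1 \<le> fact n * \<bar>coeff f n\<bar>"
proof -
  have "coeff f n = (\<Sum>i\<le>n. poly f (of_nat i) / (\<Prod>l\<in>{..n}-{i}. (of_nat i - of_nat l)))"
    by (rule coeff_eq_divided_difference) (auto simp: deg inj_on_def)
  then have "fact n * coeff f n
      = (\<Sum>i\<le>n. poly f (of_int (int i)) * (fact n / (\<Prod>l\<in>{..n}-{i}. (of_nat i - of_nat l))))"
    by (simp add: sum_distrib_left algebra_simps)
  also have "\<dots> \<in> \<int>"
  proof (intro Ints_sum Ints_mult)
    fix i assume i: "i \<in> {..n}"
    show "poly f (of_int (int i)) \<in> \<int>" using iv unfolding integer_valued_def by blast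
    have "fact n / (\<Prod>l\<in>{..n}-{i}. (of_nat i - of_nat l)) = ((-1) ^ (n - i) * of_nat (n choose i) :: rat)"
      using i by (auto simp: prod_of_nat_diff_nodes binomial_fact minus_one_power_iff)
    then show "fact n / (\<Prod>l\<in>{..n}-{i}. (of_nat i - of_nat l)) \<in> (\<int> :: rat set)" by simp
  qed
  finally have "fact n * coeff f n \<in> \<int>" .
  moreover have "coeff f n \<noteq> 0" using deg n by auto
  ultimately have "1 \<le> \<bar>fact n * coeff f n\<bar>" by (intro Ints_nonzero_abs_ge1) auto
  then show ?thesis by (simp add: abs_mult)
qed

fun cheb_poly :: "nat \<Rightarrow> real poly" where
  "cheb_poly 0 = 1"
| "cheb_poly (Suc 0) = [:0, 1:]"
| "cheb_poly (Suc (Suc n)) = [:0, 2:] * cheb_poly (Suc n) - cheb_poly n"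

lemma poly_cheb_poly_cos: "poly (cheb_poly n) (cos t) = cos (real n * t)"
proof (induction n rule: cheb_poly.induct)
  case (3 n)
  have "cos (real (Suc (Suc n)) * t) = cos ((real n + 1) * t + t)" by (simp add: algebra_simps)
  also have "\<dots> = 2 * cos t * cos ((real n + 1) * t) - cos (real n * t)"
    using cos_add[of "(real n + 1) * t" t] cos_diff[of "(real n + 1) * t" t]
    by (simp add: algebra_simps)
  finally show ?case using 3 by (simp add: algebra_simps)
qed auto

lemma degree_cheb_poly_le: "degree (cheb_poly n) \<le> n"
proof (induction n rule: cheb_poly.induct)
  case (3 n)
  have "degree ([:0, 2:] * cheb_poly (Suc n)) \<le> Suc (Suc n)"
    using 3 degree_mult_le[of "[:0, 2:]" "cheb_poly (Suc n)"] by simp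
  then show ?case using 3 by (simp add: degree_diff_le)
qed auto

lemma coeff_cheb_poly: "coeff (cheb_poly n) n = (if n = 0 then 1 else 2 ^ (n - 1))"
proof (induction n rule: cheb_poly.induct)
  case (3 n)
  have "coeff (cheb_poly n) (Suc (Suc n)) = 0"
    using degree_cheb_poly_le[of n] by (intro coeff_eq_0) auto
  then show ?case using 3 by simp
qed auto

lemma prod_diff_eq_sign_mult_prod_abs:
  fixes x :: "nat \<Rightarrow> 'a::linordered_idom"
  assumes dec: "\<And>l i. l < i \<Longrightarrow> i \<le> n \<Longrightarrow> x i < x l" and "i \<le> n"
  shows "(\<Prod>l\<in>{..n}-{i}. (x i - x l)) = (-1) ^ i * (\<Prod>l\<in>{..n}-{i}. \<bar>x i - x l\<bar>)"
proof -
  have "(\<Prod>l\<in>{..n}-{i}. (x i - x l)) = (\<Prod>l\<in>{..n}-{i}. (if l < i then -1 else 1) * \<bar>x i - x l\<bar>)"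
  proof (intro prod.cong refl)
    fix l assume "l \<in> {..n}-{i}"
    then show "x i - x l = (if l < i then -1 else 1) * \<bar>x i - x l\<bar>"
      using dec[of l i] dec[of i l] \<open>i \<le> n\<close> by (cases i l rule: linorder_cases) auto
  qed
  also have "\<dots> = (\<Prod>l\<in>{..n}-{i}. (if l < i then -1 else 1)) * (\<Prod>l\<in>{..n}-{i}. \<bar>x i - x l\<bar>)"
    by (rule prod.distrib)
  also have "(\<Prod>l\<in>{..n}-{i}. (if l < i then -1 else 1)) = (\<Prod>l\<in>({..n}-{i}) \<inter> {l. l < i}. (-1::'a))"
    by (subst prod.If_cases) auto
  also have "({..n}-{i}) \<inter> {l. l < i} = {..<i}" using \<open>i \<le> n\<close> by auto
  finally show ?thesis by simp
qed

lemma cos_nodes_decreasing: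
  assumes "l < i" "i \<le> n"
  shows "cos (pi * real i / real n) < cos (pi * real l / real n)"
proof -
  have arg: "0 \<le> pi * real k / real n \<and> pi * real k / real n \<le> pi" if "k \<le> n" for k
    using that assms by (auto simp: field_simps)
  have "pi * real l / real n < pi * real i / real n"
    using assms by (intro divide_strict_right_mono) auto
  then show ?thesis using arg[of i] arg[of l] assms by (subst cos_mono_less_eq) auto
qed

text \<open>At the extremal points \<open>cos (\<pi> i / n)\<close> of \<open>T\<^sub>n\<close> its values \<open>(-1)\<^sup>i\<close> have the signs of
  the node products, so its divided difference, the leading coefficient \<open>2\<^sup>n\<^sup>-\<^sup>1\<close>, is a sum of
  positive terms.\<close>

lemma sum_inverse_prod_cos_nodes:
  assumes "1 \<le> n"
  defines "u \<equiv> \<lambda>i. cos (pi * real i / real n)"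
  shows "(\<Sum>i\<le>n. 1 / (\<Prod>l\<in>{..n}-{i}. \<bar>u i - u l\<bar>)) = 2 ^ (n - 1)"
proof -
  have dec: "u i < u l" if "l < i" "i \<le> n" for l i
    unfolding u_def using that by (rule cos_nodes_decreasing)
  have "inj_on u {..n}"
    by (rule inj_onI) (use dec in \<open>metis atMost_iff linorder_cases order_less_irrefl\<close>)
  then have "coeff (cheb_poly n) n = (\<Sum>i\<le>n. poly (cheb_poly n) (u i) / (\<Prod>l\<in>{..n}-{i}. (u i - u l)))"
    by (intro coeff_eq_divided_difference degree_cheb_poly_le)
  also have "\<dots> = (\<Sum>i\<le>n. 1 / (\<Prod>l\<in>{..n}-{i}. \<bar>u i - u l\<bar>))"
  proof (intro sum.cong refl)
    fix i assume i: "i \<in> {..n}"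
    have "poly (cheb_poly n) (u i) = (-1) ^ i"
      unfolding u_def poly_cheb_poly_cos using assms(1) cos_npi[of i] by (simp add: field_simps)
    then show "poly (cheb_poly n) (u i) / (\<Prod>l\<in>{..n}-{i}. (u i - u l)) = 1 / (\<Prod>l\<in>{..n}-{i}. \<bar>u i - u l\<bar>)"
      using prod_diff_eq_sign_mult_prod_abs[of n u i] dec i by simp
  qed
  finally show ?thesis using coeff_cheb_poly[of n] assms(1) by simp
qed

lemma sum_inverse_prod_affine_nodes:
  fixes u :: "nat \<Rightarrow> 'a::linordered_field"
  shows "(\<Sum>i\<le>n. 1 / (\<Prod>l\<in>{..n}-{i}. \<bar>(a + b * u i) - (a + b * u l)\<bar>))
       = (\<Sum>i\<le>n. 1 / (\<Prod>l\<in>{..n}-{i}. \<bar>u i - u l\<bar>)) / \<bar>b\<bar> ^ n"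
proof -
  have "(\<Prod>l\<in>{..n}-{i}. \<bar>(a + b * u i) - (a + b * u l)\<bar>) = \<bar>b\<bar> ^ n * (\<Prod>l\<in>{..n}-{i}. \<bar>u i - u l\<bar>)"
    if "i \<le> n" for i
  proof -
    have "(\<Prod>l\<in>{..n}-{i}. \<bar>(a + b * u i) - (a + b * u l)\<bar>) = (\<Prod>l\<in>{..n}-{i}. \<bar>b\<bar> * \<bar>u i - u l\<bar>)"
      by (simp add: abs_mult flip: right_diff_distrib)
    then show ?thesis using that by (simp add: prod.distrib)
  qed
  then show ?thesis by (simp add: sum_divide_distrib ac_simps)
qed

lemma sorted_wrt_less_nth_diff_ge:
  fixes xs :: "int list"
  assumes sorted: "sorted_wrt (<) xs" and "j \<le> k" "k < length xs"
  shows "int (k - j) \<le> xs ! k - xs ! j"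
  using assms(2,3)
proof (induction k)
  case (Suc k)
  show ?case
  proof (cases "j = Suc k")
    case False
    then have "int (k - j) \<le> xs ! k - xs ! j" using Suc by auto
    moreover have "xs ! k < xs ! Suc k" using sorted_wrt_nth_less[OF sorted] Suc.prems by auto
    ultimately show ?thesis using False Suc.prems by (simp add: Suc_diff_le)
  qed simp
qed simp

text \<open>The \<open>i\<close>-th point is taken at position \<open>\<lceil>c i\<rceil> + i - 1\<close> of the sorted set; the shift by
  \<open>-1\<close>, skipped at \<open>i = 0\<close> where \<open>c 0 = 0\<close> is an integer, is what lets \<open>c n\<close> reach
  \<open>card A - n\<close>.\<close>

lemma obtain_spread_points:
  fixes A :: "int set" and c :: "nat \<Rightarrow> real"
  assumes "finite A" "1 \<le> n" "c 0 = 0"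
    and c_mono: "\<And>l i. l < i \<Longrightarrow> i \<le> n \<Longrightarrow> c l < c i"
    and room: "c n + real n \<le> real (card A)"
  obtains x where "\<And>i. i \<le> n \<Longrightarrow> x i \<in> A"
    and "\<And>l i. l < i \<Longrightarrow> i \<le> n \<Longrightarrow> c i - c l \<le> real_of_int (x i - x l)"
proof -
  define ys where "ys = sorted_list_of_set A"
  define j where "j i = (if i = 0 then 0 else nat \<lceil>c i\<rceil> + i - 1)" for i
  have j_eq: "real (j i) = of_int \<lceil>c i\<rceil> + real i - 1" if "0 < i" "i \<le> n" for i
    using c_mono[of 0 i] that \<open>c 0 = 0\<close> by (simp add: j_def of_nat_diff)
  have j_gap: "c i - c l \<le> real (j i) - real (j l)" if "l < i" "i \<le> n" for l i
  proof (cases "l = 0")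
    case True
    then show ?thesis using j_eq[of i] that \<open>c 0 = 0\<close> by (simp add: j_def) linarith
  next
    case False
    then show ?thesis using j_eq[of i] j_eq[of l] that by simp linarith
  qed
  have j_mono: "j l < j i" if "l < i" "i \<le> n" for l i
    using j_gap[OF that] c_mono[OF that] by simp
  have "real (j n) < real (length ys)"
    using j_eq[of n] room \<open>1 \<le> n\<close> \<open>finite A\<close> by (simp add: ys_def) linarith
  then have j_less: "j i < length ys" if "i \<le> n" for i
    using j_mono[of i n] that by (cases "i = n") auto
  show ?thesis
  proof
    show "ys ! j i \<in> A" if "i \<le> n" for i
      using j_less[OF that] \<open>finite A\<close> nth_mem[of "j i" ys] by (simp add: ys_def)
    show "c i - c l \<le> real_of_int (ys ! j i - ys ! j l)" if "l < i" "i \<le> n" for l i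
    proof -
      have "int (j i - j l) \<le> ys ! j i - ys ! j l"
        using j_mono[OF that] j_less[OF that(2)]
        by (intro sorted_wrt_less_nth_diff_ge) (auto simp: ys_def)
      then have "real (j i) - real (j l) \<le> real_of_int (ys ! j i - ys ! j l)"
        using j_mono[OF that] by (simp add: of_nat_diff flip: of_int_le_iff)
      then show ?thesis using j_gap[OF that] by linarith
    qed
  qed
qed

lemma abs_coeff_le_spread_nodes:
  fixes p :: "'a::linordered_field poly" and x c :: "nat \<Rightarrow> 'a"
  assumes deg: "degree p \<le> n"
    and c_mono: "\<And>l i. l < i \<Longrightarrow> i \<le> n \<Longrightarrow> c l < c i"
    and spread: "\<And>l i. l < i \<Longrightarrow> i \<le> n \<Longrightarrow> c i - c l \<le> x i - x l"
    and bounded: "\<And>i. i \<le> n \<Longrightarrow> \<bar>poly p (x i)\<bar> \<le> K"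
  shows "\<bar>coeff p n\<bar> \<le> K * (\<Sum>i\<le>n. 1 / (\<Prod>l\<in>{..n}-{i}. \<bar>c i - c l\<bar>))"
proof -
  have gap: "0 < \<bar>c i - c l\<bar> \<and> \<bar>c i - c l\<bar> \<le> \<bar>x i - x l\<bar>" if "i \<le> n" "l \<le> n" "i \<noteq> l" for i l
    using c_mono[of i l] c_mono[of l i] spread[of i l] spread[of l i] that
    by (cases i l rule: linorder_cases) auto
  then have "inj_on x {..n}" by (intro inj_onI) force
  then have "\<bar>coeff p n\<bar> = \<bar>\<Sum>i\<le>n. poly p (x i) / (\<Prod>l\<in>{..n}-{i}. (x i - x l))\<bar>"
    using deg by (simp add: coeff_eq_divided_difference)
  also have "\<dots> \<le> (\<Sum>i\<le>n. \<bar>poly p (x i)\<bar> / (\<Prod>l\<in>{..n}-{i}. \<bar>x i - x l\<bar>))"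
    by (rule order.trans[OF sum_abs]) (simp add: abs_prod)
  also have "\<dots> \<le> (\<Sum>i\<le>n. K / (\<Prod>l\<in>{..n}-{i}. \<bar>c i - c l\<bar>))"
  proof (intro sum_mono frac_le)
    fix i assume "i \<in> {..n}"
    then show "0 \<le> K" "\<bar>poly p (x i)\<bar> \<le> K" using bounded[of i] by auto
    show "0 < (\<Prod>l\<in>{..n}-{i}. \<bar>c i - c l\<bar>)" using gap \<open>i \<in> {..n}\<close> by (intro prod_pos) auto
    show "(\<Prod>l\<in>{..n}-{i}. \<bar>c i - c l\<bar>) \<le> (\<Prod>l\<in>{..n}-{i}. \<bar>x i - x l\<bar>)"
      using gap \<open>i \<in> {..n}\<close> by (intro prod_mono) auto
  qed
  finally show ?thesis by (simp add: sum_distrib_left)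
qed

lemma abs_coeff_le_if_bounded_on_int_set:
  fixes p :: "real poly" and A :: "int set"
  assumes deg: "degree p \<le> n" and n: "1 \<le> n" and "finite A" "n < card A"
    and bounded: "\<And>m. m \<in> A \<Longrightarrow> \<bar>poly p (of_int m)\<bar> \<le> K"
  shows "\<bar>coeff p n\<bar> \<le> K * 2 ^ (2 * n - 1) / real (card A - n) ^ n"
proof -
  define M where "M = real (card A - n)"
  have M: "1 \<le> M" "real (card A) = real n + M" using \<open>n < card A\<close> by (auto simp: M_def of_nat_diff)
  \<comment> \<open>the extremal points of the Chebyshev polynomial, moved from \<open>[-1, 1]\<close> to \<open>[0, M]\<close>\<close>
  define c where "c i = M / 2 + (- M / 2) * cos (pi * real i / real n)" for i
  have c_mono: "c l < c i" if "l < i" "i \<le> n" for l i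
    using cos_nodes_decreasing[OF that] M by (simp add: c_def)
  have "c 0 = 0" "c n + real n \<le> real (card A)" using n M by (auto simp: c_def)
  then obtain x where x_in: "\<And>i. i \<le> n \<Longrightarrow> x i \<in> A"
    and spread: "\<And>l i. l < i \<Longrightarrow> i \<le> n \<Longrightarrow> c i - c l \<le> real_of_int (x i - x l)"
    using obtain_spread_points[OF \<open>finite A\<close>, of n c] n c_mono by auto
  have "\<bar>coeff p n\<bar> \<le> K * (\<Sum>i\<le>n. 1 / (\<Prod>l\<in>{..n}-{i}. \<bar>c i - c l\<bar>))"
    using c_mono spread x_in bounded deg
    by (intro abs_coeff_le_spread_nodes[where x = "\<lambda>i. of_int (x i)"]) auto
  also have "(\<Sum>i\<le>n. 1 / (\<Prod>l\<in>{..n}-{i}. \<bar>c i - c l\<bar>)) = 2 ^ (n - 1) * 2 ^ n / M ^ n"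
    unfolding c_def sum_inverse_prod_affine_nodes sum_inverse_prod_cos_nodes[OF n]
    using M by (simp add: power_divide)
  also have "(2::real) ^ (n - 1) * 2 ^ n = 2 ^ (2 * n - 1)"
    using n by (simp flip: power_add)
  finally show ?thesis by (simp add: M_def)
qed

lemma poly_map_poly_of_rat: "poly (map_poly of_rat p) (of_rat x) = of_rat (poly p x)"
  by (induction p) (simp_all add: map_poly_pCons of_rat_add of_rat_mult)

lemma le_mult_powr_inverse_if_power_le:
  fixes M a b :: real
  assumes "0 \<le> M" "0 \<le> a" "0 \<le> b" "0 < n" and "M ^ n \<le> b ^ n * a"
  shows "M \<le> b * a powr (1 / real n)"
proof -
  have "M = root n (M ^ n)" using assms by (simp add: real_root_power_cancel)
  also have "\<dots> \<le> root n (b ^ n * a)" using assms by (simp add: real_root_le_iff)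
  also have "\<dots> = b * root n a" using assms by (simp add: real_root_mult real_root_power_cancel)
  finally show ?thesis using assms by (simp add: root_powr_inverse)
qed

lemma card_le_if_integer_valued_bounded:
  fixes f :: "rat poly" and K :: real and A :: "int set"
  assumes iv: "integer_valued f" and deg: "degree f = n" and n: "1 \<le> n"
    and "finite A" and bounded: "\<And>m. m \<in> A \<Longrightarrow> \<bar>real_of_rat (poly f (of_int m))\<bar> \<le> K"
  shows "real (card A) \<le> real n + 4 * (K * fact n) powr (1 / real n)"
proof (cases "card A \<le> n")
  case True
  then show ?thesis using powr_ge_zero[of "K * fact n" "1 / real n"] by (simp add: add_increasing2)
next
  case False
  define M where "M = real (card A - n)"
  have M: "1 \<le> M" "real (card A) = real n + M" using False by (auto simp: M_def of_nat_diff)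
  obtain a where "a \<in> A" using False by fastforce
  then have "0 \<le> K" using bounded[of a] by linarith
  define p where "p = map_poly real_of_rat f"
  have "poly p (of_int m) = real_of_rat (poly f (of_int m))" for m
    using poly_map_poly_of_rat[of f "of_int m"] by (simp add: p_def)
  then have coeff_le: "\<bar>coeff p n\<bar> \<le> K * 2 ^ (2 * n - 1) / M ^ n"
    unfolding M_def using False bounded deg n \<open>finite A\<close>
    by (intro abs_coeff_le_if_bounded_on_int_set) (auto simp: p_def degree_map_poly)
  have "1 \<le> real_of_rat (fact n * \<bar>coeff f n\<bar>)"
    using integer_valued_fact_mult_coeff_ge_one[OF iv deg n] by (simp add: of_rat_less_eq)
  moreover have "real_of_rat (fact n) = fact n" by (metis of_nat_fact of_rat_of_nat_eq)
  ultimately have coeff_ge: "1 \<le> fact n * \<bar>coeff p n\<bar>"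
    by (simp add: p_def coeff_map_poly of_rat_mult)
  have "M ^ n \<le> M ^ n * (fact n * \<bar>coeff p n\<bar>)"
    using coeff_ge M by simp
  also have "\<dots> \<le> M ^ n * (fact n * (K * 2 ^ (2 * n - 1) / M ^ n))"
    using coeff_le M by (intro mult_left_mono) auto
  also have "\<dots> = 2 ^ (2 * n - 1) * (K * fact n)"
    using M by simp
  also have "\<dots> \<le> 4 ^ n * (K * fact n)"
  proof -
    have "(2::real) ^ (2 * n - 1) \<le> 2 ^ (2 * n)" by (rule power_increasing) auto
    then show ?thesis using \<open>0 \<le> K\<close> by (intro mult_right_mono) (simp_all add: power_mult)
  qed
  finally have "M \<le> 4 * (K * fact n) powr (1 / real n)"
    using M n \<open>0 \<le> K\<close> by (intro le_mult_powr_inverse_if_power_le) auto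
  with M show ?thesis by simp
qed

lemma finite_and_card_le_if_finite_subsets_card_le:
  assumes "\<And>G. G \<subseteq> F \<Longrightarrow> finite G \<Longrightarrow> real (card G) \<le> B"
  shows "finite F \<and> real (card F) \<le> B"
proof -
  have "finite F \<and> card F \<le> nat \<lfloor>B\<rfloor>"
    by (rule finite_if_finite_subsets_card_bdd) (use assms in \<open>simp add: le_nat_floor\<close>)
  moreover have "0 \<le> B" using assms[of "{}"] by simp
  ultimately show ?thesis by linarith
qed

lemma ln_fact_le:
  assumes "1 \<le> n"
  shows "ln (fact n) \<le> 1 + (real n + 1) * ln (real n) - real n"
  using assms
proof (induction n rule: nat_induct_at_least)
  case (Suc n)
  have "ln (real n / (real n + 1)) \<le> real n / (real n + 1) - 1"
    using Suc by (intro ln_le_minus_one) auto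
  then have "(real n + 1) * ln (real n) \<le> (real n + 1) * ln (real n + 1) - 1"
    using Suc by (simp add: ln_div field_simps)
  moreover have "ln (fact (Suc n)) = ln (real n + 1) + ln (fact n)"
    by (simp add: ln_mult add.commute)
  ultimately show ?case using Suc by (simp add: algebra_simps)
qed simp

lemma fact_powr_inverse_le:
  assumes "0 < K" "1 \<le> n"
  shows "(K * fact n) powr (1 / real n) \<le> real n / exp 1 * (K * exp 1 * real n) powr (1 / real n)"
proof -
  have "ln (K * fact n) \<le> real n * (ln (real n) - 1) + ln (K * exp 1 * real n)"
    using ln_fact_le[OF assms(2)] assms by (simp add: ln_mult algebra_simps)
  then have "ln (K * fact n) / real n \<le> (ln (real n) - 1) + ln (K * exp 1 * real n) / real n"
    using assms by (simp add: field_simps)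
  then have "exp (ln (K * fact n) / real n) \<le> exp (ln (real n) - 1) * exp (ln (K * exp 1 * real n) / real n)"
    by (simp flip: exp_add)
  then show ?thesis using assms by (simp add: powr_def exp_diff)
qed

lemma exp_minus_one_le_mult_exp: "exp y - 1 \<le> y * exp (y::real)"
proof -
  have "(1 - y) * exp y \<le> exp (- y) * exp y"
    using exp_ge_add_one_self[of "- y"] by (intro mult_right_mono) auto
  then show ?thesis by (simp add: exp_minus algebra_simps)
qed

lemma mult_powr_inverse_le_add_log:
  fixes a :: real
  assumes "0 < a"
  obtains C where "\<And>n::nat. 2 \<le> n \<Longrightarrow> real n * (a * real n) powr (1 / real n) \<le> real n + C * ln (real n)"
proof -
  define b where "b = \<bar>ln a\<bar>"
  define C where "C = exp (b + 1) * (b / ln 2 + 1)"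
  have "real n * (a * real n) powr (1 / real n) \<le> real n + C * ln (real n)" if "2 \<le> n" for n :: nat
  proof -
    define L where "L = ln (a * real n)"
    have n: "0 < real n" "ln 2 \<le> ln (real n)" using that by auto
    have "(a * real n) powr (1 / real n) = exp (L / real n)"
      using assms n by (simp add: powr_def L_def)
    moreover have "real n * exp (L / real n) \<le> real n + L * exp (L / real n)"
      using exp_minus_one_le_mult_exp[of "L / real n"] n by (simp add: field_simps)
    moreover have "L * exp (L / real n) \<le> C * ln (real n)"
    proof (cases "L \<le> 0")
      case True
      then have "L * exp (L / real n) \<le> 0" by (simp add: mult_nonpos_nonneg)
      moreover have "0 \<le> C * ln (real n)" using n ln_gt_zero[of 2] by (simp add: C_def b_def)
      ultimately show ?thesis by linarith
    next
      case False
      have L_le: "L \<le> b + ln (real n)" using assms n by (simp add: L_def b_def ln_mult)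
      moreover have "ln (real n) \<le> real n" using ln_le_minus_one[of "real n"] n by simp
      moreover have "b \<le> real n * b" using that by (simp add: b_def mult_le_cancel_right1)
      ultimately have "L / real n \<le> b + 1" using n by (simp add: field_simps)
      then have "L * exp (L / real n) \<le> (b + ln (real n)) * exp (b + 1)"
        using False L_le by (intro mult_mono) auto
      also have "\<dots> \<le> C * ln (real n)"
      proof -
        have "b * 1 \<le> b * (ln (real n) / ln 2)"
          using n by (intro mult_left_mono) (simp_all add: b_def)
        then have "b + ln (real n) \<le> (b / ln 2 + 1) * ln (real n)"
          by (simp add: algebra_simps)
        then show ?thesis using mult_right_mono[of _ _ "exp (b + 1)"] by (simp add: C_def ac_simps)
      qed
      finally show ?thesis .
    qed
    ultimately show ?thesis by simp
  qed
  then show ?thesis using that by blast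
qed

lemma card_bound_le_linear_add_log:
  assumes "0 < K"
  obtains C where "\<And>n. 2 \<le> n \<Longrightarrow>
    real n + 4 * (K * fact n) powr (1 / real n) \<le> (1 + 4 / exp 1) * real n + C * ln (real n)"
proof -
  obtain C where C: "\<And>n::nat. 2 \<le> n \<Longrightarrow>
      real n * (K * exp 1 * real n) powr (1 / real n) \<le> real n + C * ln (real n)"
    using mult_powr_inverse_le_add_log[of "K * exp 1"] assms by auto
  have "real n + 4 * (K * fact n) powr (1 / real n)
      \<le> (1 + 4 / exp 1) * real n + 4 / exp 1 * C * ln (real n)" if "2 \<le> n" for n
  proof -
    have "(K * fact n) powr (1 / real n) \<le> (real n * (K * exp 1 * real n) powr (1 / real n)) / exp 1"
      using fact_powr_inverse_le[OF assms, of n] that by simp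
    also have "\<dots> \<le> (real n + C * ln (real n)) / exp 1"
      using C[OF that] by (simp add: divide_right_mono)
    finally show ?thesis by (simp add: field_simps)
  qed
  then show ?thesis using that by blast
qed

theorem mainTheorem8:
  fixes K :: real
  assumes "K > 0"
  shows "(\<forall>f n. integer_valued f \<and> degree f = n \<and> n \<ge> 1 \<longrightarrow>
            finite {m::int. \<bar>real_of_rat (poly f (of_int m))\<bar> \<le> K} \<and>
            real (card {m::int. \<bar>real_of_rat (poly f (of_int m))\<bar> \<le> K})
              \<le> real n + 4 * (K * fact n) powr (1 / real n))
       \<and> (\<exists>C::real. \<forall>f n S. integer_valued f \<and> degree f = n \<and> n \<ge> 2 \<and>
            finite S \<and> (\<forall>s\<in>S. real_of_int \<bar>s\<bar> \<le> K) \<longrightarrow>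
            real (E_S S f) \<le> (1 + 4 / exp 1) * real n + C * ln (real n))"
proof -
  let ?T = "\<lambda>f. {m::int. \<bar>real_of_rat (poly f (of_int m))\<bar> \<le> K}"
  have count: "finite (?T f) \<and> real (card (?T f)) \<le> real n + 4 * (K * fact n) powr (1 / real n)"
    if "integer_valued f" "degree f = n" "1 \<le> n" for f n
    using card_le_if_integer_valued_bounded[OF that]
    by (intro finite_and_card_le_if_finite_subsets_card_le) auto
  obtain C where C: "\<And>n. 2 \<le> n \<Longrightarrow>
      real n + 4 * (K * fact n) powr (1 / real n) \<le> (1 + 4 / exp 1) * real n + C * ln (real n)"
    using card_bound_le_linear_add_log[OF assms] by blast
  have "real (E_S S f) \<le> (1 + 4 / exp 1) * real n + C * ln (real n)"
    if "integer_valued f" "degree f = n" "2 \<le> n" "\<forall>s\<in>S. real_of_int \<bar>s\<bar> \<le> K" for f n S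
  proof -
    have "{m. poly f (of_int m) \<in> of_int ` S} \<subseteq> ?T f"
      using that(4) by (auto simp flip: of_int_abs)
    then have "E_S S f \<le> card (?T f)"
      unfolding E_S_def using count[of f n] that by (intro card_mono) auto
    then show ?thesis using count[of f n] C[of n] that by force
  qed
  with count show ?thesis by blast
qed

end
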